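(* Let $k$ be a positive integer. The triangular grid graph $T_k$ with $k$ levels is cyclically orderable if and only if $k\le 4$.
   Context: For a positive integer $k$, the triangular grid graph $T_k$ with $k$ levels is the graph whose vertices are the pairs $(i,j)$ of integers with $0\le j\le i\le k-1$, and in which $(i,j)$ is adjacent to $(i,j+1)$ (when $j+1\le i$), to $(i+1,j)$ and to $(i+1,j+1)$ (when $i+1\le k-1$); it is the triangular lattice cut into the shape of a large triangle with $k$ vertices on each side. A cyclic base ordering (CBO) of a connected graph $G$ is a cyclic ordering of $E(G)$, i.e. a bijection $\mathcal{O}:E(G)\to\{1,\dots,|E(G)|\}$, such that for every $i\in\{1,\dots,|E(G)|\}$ the edges $\mathcal{O}^{-1}(i),\mathcal{O}^{-1}(i+1),\dots,\mathcal{O}^{-1}(i+|V(G)|-2)$ (indices taken cyclically modulo $|E(G)|$) induce a spanning tree of $G$. $G$ is cyclically orderable if it has a CBO. The one-vertex edgeless graph $T_1$ is regarded as trivially cyclically orderable. *)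

theory Defs
  imports Main
begin

definition tri_vertices :: "nat \<Rightarrow> (nat \<times> nat) set" where
  "tri_vertices k = {(i, j). j \<le> i \<and> i + 1 \<le> k}"

definition tri_edges :: "nat \<Rightarrow> (nat \<times> nat) set set" where
  "tri_edges k =
     {{(i, j), (i, j + 1)} | i j. j + 1 \<le> i \<and> i + 1 \<le> k}
   \<union> {{(i, j), (i + 1, j)} | i j. j \<le> i \<and> i + 2 \<le> k}
   \<union> {{(i, j), (i + 1, j + 1)} | i j. j \<le> i \<and> i + 2 \<le> k}"

definition connected_on :: "'a set \<Rightarrow> 'a set set \<Rightarrow> bool" where
  "connected_on V F \<longleftrightarrow>
     (\<forall>u\<in>V. \<forall>v\<in>V. (u, v) \<in> {(x, y). {x, y} \<in> F}\<^sup>*)"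

text \<open>F is (the edge set of) a spanning tree of the graph (V, E):
  F \<subseteq> E, (V, F) connected, and |F| = |V| - 1 (a connected finite graph with |V|-1 edges is a tree).\<close>
definition spanning_tree :: "'a set \<Rightarrow> 'a set set \<Rightarrow> 'a set set \<Rightarrow> bool" where
  "spanning_tree V E F \<longleftrightarrow> F \<subseteq> E \<and> connected_on V F \<and> card F = card V - 1"

definition cyclic_base_ordering :: "'a set \<Rightarrow> 'a set set \<Rightarrow> ('a set \<Rightarrow> nat) \<Rightarrow> bool" where
  "cyclic_base_ordering V E ord \<longleftrightarrow>
     bij_betw ord E {1..card E} \<and>
     (\<forall>i\<in>{1..card E}.
        spanning_tree V E
          ((\<lambda>t. the_inv_into E ord (((i - 1 + t) mod card E) + 1)) ` {..< card V - 1}))"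

definition cyclically_orderable :: "'a set \<Rightarrow> 'a set set \<Rightarrow> bool" where
  "cyclically_orderable V E \<longleftrightarrow> (\<exists>ord. cyclic_base_ordering V E ord)"

end

theory Submission
  imports Defs "HOL-Number_Theory.Cong"
begin

text \<open>The corner (0, 0) of \<open>T\<^sub>k\<close> has degree 2. In a cyclic base ordering every window of
  \<open>|V| - 1\<close> consecutive edges is a spanning tree and so contains one of these two edges; the
  windows containing a fixed edge are at most \<open>|V| - 1\<close>, hence \<open>|E| \<le> 2 (|V| - 1)\<close>. With
  \<open>|V| = k (k + 1) / 2\<close> and \<open>|E| = 3 k (k - 1) / 2\<close> this reads \<open>3 k \<le> 2 (k + 2)\<close>, i.e.
  \<open>k \<le> 4\<close>. For \<open>k \<le> 4\<close> explicit orderings are checked by evaluation, connectivity of each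
  window being certified by exploring it from the corner.\<close>

abbreviation adjacency :: "'a set set \<Rightarrow> ('a \<times> 'a) set" where
  "adjacency F \<equiv> {(x, y). {x, y} \<in> F}"

definition cyclic_windows :: "nat \<Rightarrow> 'a list \<Rightarrow> 'a list list" where
  "cyclic_windows L es = map (\<lambda>s. take L (rotate s es)) [0..<length es]"

lemma set_take_rotate:
  assumes "L \<le> length xs"
  shows "set (take L (rotate s xs)) = (\<lambda>t. xs ! ((s + t) mod length xs)) ` {..<L}"
proof -
  have "set (take L (rotate s xs)) = (\<lambda>t. rotate s xs ! t) ` {..<L}"
    using assms by (auto simp: set_conv_nth image_iff) (metis nth_take)
  also have "\<dots> = (\<lambda>t. xs ! ((s + t) mod length xs)) ` {..<L}"
    using assms by (intro image_cong) (auto simp: nth_rotate)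
  finally show ?thesis .
qed

lemma cyclically_orderable_if_windows_connected:
  assumes "distinct es" and "set es = E" and "card V - 1 \<le> length es"
    and "\<forall>W\<in>set (cyclic_windows (card V - 1) es). connected_on V (set W)"
  shows "cyclically_orderable V E"
proof -
  define m where "m = length es"
  define L where "L = card V - 1"
  define edge where "edge i = es ! (i - 1)" for i
  define ord where "ord = the_inv_into {1..m} edge"
  have edge_bij: "bij_betw edge {1..m} E"
  proof -
    have "bij_betw ((!) es) {..<m} E"
      using bij_betw_nth[OF assms(1)] assms(2) by (simp add: m_def)
    moreover have "bij_betw (\<lambda>i. i - 1) {1..m} {..<m}"
      by (rule bij_betw_byWitness[where f' = Suc]) auto
    moreover have "edge = (!) es \<circ> (\<lambda>i. i - 1)"
      by (auto simp: edge_def)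
    ultimately show ?thesis
      using bij_betw_trans by metis
  qed
  then have ord_bij: "bij_betw ord E {1..m}"
    unfolding ord_def by (rule bij_betw_the_inv_into)
  have card_E: "card E = m"
    using assms(1,2) distinct_card m_def by blast
  have inv_ord: "the_inv_into E ord i = edge i" if "i \<in> {1..m}" for i
    using that edge_bij ord_bij
    by (intro the_inv_into_f_eq) (auto simp: ord_def bij_betw_def the_inv_into_f_f)
  have "spanning_tree V E ((\<lambda>t. the_inv_into E ord ((i - 1 + t) mod m + 1)) ` {..<L})"
    if i: "i \<in> {1..m}" for i
  proof -
    define s where "s = i - 1"
    have "s < m" using i s_def by auto
    let ?W = "take L (rotate s es)"
    have window: "(\<lambda>t. the_inv_into E ord ((i - 1 + t) mod m + 1)) ` {..<L} = set ?W"
    proof -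
      have "(\<lambda>t. the_inv_into E ord ((i - 1 + t) mod m + 1)) ` {..<L}
          = (\<lambda>t. es ! ((s + t) mod m)) ` {..<L}"
        using \<open>s < m\<close> by (intro image_cong) (simp_all add: inv_ord edge_def s_def Suc_leI)
      also have "\<dots> = set ?W"
        using assms(3) by (simp add: set_take_rotate L_def m_def)
      finally show ?thesis .
    qed
    have "?W \<in> set (cyclic_windows L es)"
      using \<open>s < m\<close> by (auto simp: cyclic_windows_def m_def)
    then have "connected_on V (set ?W)"
      using assms(4) L_def by blast
    moreover have "card (set ?W) = L"
      using assms(1,3) by (simp add: distinct_card L_def)
    moreover have "set ?W \<subseteq> E"
      using assms(2) set_take_subset by fastforce
    ultimately show ?thesis
      unfolding window spanning_tree_def by (simp add: L_def)
  qed
  then show ?thesis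
    unfolding cyclically_orderable_def cyclic_base_ordering_def card_E L_def
    using ord_bij by blast
qed

fun explore :: "nat \<Rightarrow> 'a set list \<Rightarrow> 'a set \<Rightarrow> 'a set" where
  "explore 0 W S = S"
| "explore (Suc n) W S = explore n W (S \<union> \<Union> {e \<in> set W. e \<inter> S \<noteq> {}})"

lemma explore_reachable:
  assumes "\<forall>e\<in>set W. \<exists>x y. e = {x, y}" and "v \<in> explore n W S"
  shows "\<exists>u\<in>S. (u, v) \<in> (adjacency (set W))\<^sup>*"
  using assms(2)
proof (induction n arbitrary: S)
  case 0
  then show ?case by auto
next
  case (Suc n)
  then have "v \<in> explore n W (S \<union> \<Union> {e \<in> set W. e \<inter> S \<noteq> {}})"
    by simp
  then have "\<exists>w\<in>S \<union> \<Union> {e \<in> set W. e \<inter> S \<noteq> {}}. (w, v) \<in> (adjacency (set W))\<^sup>*"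
    by (rule Suc.IH)
  then obtain w where w: "w \<in> S \<union> \<Union> {e \<in> set W. e \<inter> S \<noteq> {}}"
    and wv: "(w, v) \<in> (adjacency (set W))\<^sup>*" ..
  have "\<exists>u\<in>S. u = w \<or> (u, w) \<in> adjacency (set W)"
  proof (cases "w \<in> S")
    case False
    with w obtain e u where "e \<in> set W" "w \<in> e" "u \<in> e" "u \<in> S"
      by auto
    moreover from \<open>e \<in> set W\<close> obtain x y where "e = {x, y}"
      using assms(1) by meson
    ultimately have "u = w \<or> {u, w} \<in> set W"
      by (auto simp: insert_commute)
    with \<open>u \<in> S\<close> show ?thesis
      by blast
  qed blast
  with wv show ?case
    by (blast intro: converse_rtrancl_into_rtrancl)
qed

lemma connected_on_if_explore:
  assumes "\<forall>e\<in>set W. \<exists>x y. e = {x, y}" and "V \<subseteq> explore n W {r}"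
  shows "connected_on V (set W)"
proof -
  have "sym ((adjacency (set W))\<^sup>*)"
    by (intro sym_rtrancl) (auto simp: sym_def insert_commute)
  moreover have "(r, v) \<in> (adjacency (set W))\<^sup>*" if "v \<in> V" for v
    using explore_reachable[OF assms(1)] assms(2) that by blast
  ultimately show ?thesis
    unfolding connected_on_def by (meson rtrancl_trans symD)
qed

lemma walk_first_edge:
  assumes "(u, v) \<in> (adjacency F)\<^sup>*" and "u \<noteq> v"
  obtains y where "{u, y} \<in> F"
  using assms by (cases rule: converse_rtranclE) auto

lemma card_le_card_mult_if_cyclic_windows_hit:
  fixes m L :: nat
  assumes "finite P" and "\<forall>s<m. \<exists>t<L. (s + t) mod m \<in> P"
  shows "m \<le> card P * L"
proof -
  obtain off where off: "\<forall>s<m. off s < L \<and> (s + off s) mod m \<in> P"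
    using assms(2) by metis
  define f where "f s = ((s + off s) mod m, off s)" for s
  have "inj_on f {..<m}"
  proof (rule inj_onI)
    fix s s' assume "s \<in> {..<m}" "s' \<in> {..<m}" "f s = f s'"
    then have "[s + off s = s' + off s] (mod m)" and "s < m" "s' < m"
      by (auto simp: f_def cong_def)
    then show "s = s'"
      unfolding cong_add_rcancel_nat by (simp add: cong_def)
  qed
  moreover have "f ` {..<m} \<subseteq> P \<times> {..<L}"
    using off by (auto simp: f_def)
  ultimately have "card {..<m} \<le> card (P \<times> {..<L})"
    using assms(1) by (intro card_inj_on_le) auto
  then show ?thesis
    by (simp add: card_cartesian_product)
qed

lemma cyclic_base_ordering_card_le:
  assumes cbo: "cyclic_base_ordering V E ord" and "u \<in> V" "v \<in> V" "u \<noteq> v"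
  shows "card E \<le> card {e \<in> E. u \<in> e} * (card V - 1)"
proof -
  define m where "m = card E"
  define L where "L = card V - 1"
  have ord_bij: "bij_betw ord E {1..m}"
    and windows: "\<forall>i\<in>{1..m}. spanning_tree V E
       ((\<lambda>t. the_inv_into E ord ((i - 1 + t) mod m + 1)) ` {..<L})"
    using cbo unfolding cyclic_base_ordering_def m_def L_def by auto
  have "finite E"
    using bij_betw_finite[OF ord_bij] by simp
  define P where "P = (\<lambda>e. ord e - 1) ` {e \<in> E. u \<in> e}"
  have "\<exists>t<L. (s + t) mod m \<in> P" if "s < m" for s
  proof -
    let ?W = "(\<lambda>t. the_inv_into E ord ((s + t) mod m + 1)) ` {..<L}"
    have "spanning_tree V E ?W"
      using windows[rule_format, of "s + 1"] that by simp
    then have "?W \<subseteq> E" and walk: "(u, v) \<in> (adjacency ?W)\<^sup>*"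
      using assms(2,3) unfolding spanning_tree_def connected_on_def by auto
    obtain y where "{u, y} \<in> ?W"
      using walk \<open>u \<noteq> v\<close> by (rule walk_first_edge)
    then obtain t where "t < L" and edge: "the_inv_into E ord ((s + t) mod m + 1) = {u, y}"
      by auto
    have "(s + t) mod m + 1 \<in> {1..m}"
      using that by (simp add: Suc_leI)
    then have "ord {u, y} = (s + t) mod m + 1"
      using edge ord_bij f_the_inv_into_f_bij_betw by metis
    moreover have "{u, y} \<in> E"
      using \<open>?W \<subseteq> E\<close> \<open>{u, y} \<in> ?W\<close> by blast
    ultimately have "(s + t) mod m \<in> P"
      unfolding P_def by (auto intro!: image_eqI[of _ _ "{u, y}"])
    with \<open>t < L\<close> show ?thesis
      by blast
  qed
  then have "m \<le> card P * L"
    by (intro card_le_card_mult_if_cyclic_windows_hit) (simp_all add: P_def \<open>finite E\<close>)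
  also have "\<dots> \<le> card {e \<in> E. u \<in> e} * L"
    unfolding P_def using \<open>finite E\<close> by (intro mult_right_mono card_image_le) auto
  finally show ?thesis
    by (simp add: m_def L_def)
qed

lemma tri_vertices_eq_Sigma: "tri_vertices k = (SIGMA i:{..<k}. {..i})"
  by (auto simp: tri_vertices_def)

lemma finite_tri_vertices: "finite (tri_vertices k)"
  by (simp add: tri_vertices_eq_Sigma)

lemma two_card_tri_vertices: "2 * card (tri_vertices k) = k * (k + 1)"
proof -
  have "2 * (\<Sum>i<k. Suc i) = k * (k + 1)"
    by (induction k) auto
  then show ?thesis
    by (simp add: tri_vertices_eq_Sigma)
qed

text \<open>The edges of \<open>T\<^sub>k\<close> are partitioned into the boundaries of the upward unit triangles,
  indexed by their apexes, which form a copy of \<open>T\<^bsub>k-1\<^esub>\<close>.\<close>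

fun up_triangle :: "nat \<times> nat \<Rightarrow> (nat \<times> nat) set set" where
  "up_triangle (i, j) =
     {{(i, j), (i + 1, j)}, {(i, j), (i + 1, j + 1)}, {(i + 1, j), (i + 1, j + 1)}}"

lemma up_triangle_subset_tri_edges:
  assumes "j \<le> i" and "i + 2 \<le> k"
  shows "up_triangle (i, j) \<subseteq> tri_edges k"
  using assms unfolding tri_edges_def by auto

lemma tri_edges_eq_UN_up_triangle: "tri_edges k = (\<Union>p\<in>tri_vertices (k - 1). up_triangle p)"
proof
  show "tri_edges k \<subseteq> (\<Union>p\<in>tri_vertices (k - 1). up_triangle p)"
  proof
    fix e assume "e \<in> tri_edges k"
    then consider (horizontal) i j where "e = {(i, j), (i, j + 1)}" "j + 1 \<le> i" "i + 1 \<le> k"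
      | (diagonal) i j where "e \<in> up_triangle (i, j)" "j \<le> i" "i + 2 \<le> k"
      unfolding tri_edges_def by auto
    then show "e \<in> (\<Union>p\<in>tri_vertices (k - 1). up_triangle p)"
    proof cases
      case (horizontal i j)
      then have "e \<in> up_triangle (i - 1, j)" and "(i - 1, j) \<in> tri_vertices (k - 1)"
        by (auto simp: tri_vertices_def)
      then show ?thesis by blast
    next
      case (diagonal i j)
      then have "(i, j) \<in> tri_vertices (k - 1)"
        by (auto simp: tri_vertices_def)
      with diagonal show ?thesis by blast
    qed
  qed
  show "(\<Union>p\<in>tri_vertices (k - 1). up_triangle p) \<subseteq> tri_edges k"
    using up_triangle_subset_tri_edges by (auto simp: tri_vertices_def)
qed

lemma card_up_triangle: "card (up_triangle p) = 3"
  by (cases p) (auto simp: doubleton_eq_iff)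

lemma up_triangle_disjoint: "p \<noteq> q \<Longrightarrow> up_triangle p \<inter> up_triangle q = {}"
  by (cases p; cases q) (auto simp: doubleton_eq_iff)

lemma card_tri_edges: "card (tri_edges k) = 3 * card (tri_vertices (k - 1))"
  unfolding tri_edges_eq_UN_up_triangle
  by (subst card_UN_disjoint) (auto simp: finite_tri_vertices card_up_triangle up_triangle_disjoint)

lemma tri_edges_at_apex: "{e \<in> tri_edges k. (0, 0) \<in> e} \<subseteq> {{(0, 0), (1, 0)}, {(0, 0), (1, 1)}}"
  by (auto simp: tri_edges_def)

lemma tri_cyclically_orderable_imp_le_4:
  assumes "cyclically_orderable (tri_vertices k) (tri_edges k)"
  shows "k \<le> 4"
proof (rule ccontr)
  assume "\<not> k \<le> 4"
  then have "k \<ge> 5" by simp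
  from assms obtain ord where cbo: "cyclic_base_ordering (tri_vertices k) (tri_edges k) ord"
    unfolding cyclically_orderable_def by blast
  have apex: "(0, 0) \<in> tri_vertices k" "(1, 0) \<in> tri_vertices k"
    using \<open>k \<ge> 5\<close> by (auto simp: tri_vertices_def)
  have "card {e \<in> tri_edges k. (0, 0) \<in> e}
      \<le> card {{(0, 0), (1, 0)}, {(0::nat, 0::nat), (1, 1)}}"
    by (rule card_mono[OF _ tri_edges_at_apex]) simp
  also have "\<dots> \<le> 2"
    by (simp add: card_insert_if)
  finally have apex_degree: "card {e \<in> tri_edges k. (0, 0) \<in> e} \<le> 2" .
  have "card (tri_edges k)
      \<le> card {e \<in> tri_edges k. (0, 0) \<in> e} * (card (tri_vertices k) - 1)"
    by (rule cyclic_base_ordering_card_le[OF cbo apex]) simp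
  also have "\<dots> \<le> 2 * (card (tri_vertices k) - 1)"
    using apex_degree by (rule mult_right_mono) simp
  finally have "card (tri_edges k) \<le> 2 * (card (tri_vertices k) - 1)" .
  moreover have "0 < card (tri_vertices k)"
    using apex by (auto simp: card_gt_0_iff finite_tri_vertices)
  moreover have "2 * card (tri_edges k) + 3 * k = 3 * (k * k)"
  proof -
    obtain n where "k = Suc n"
      using \<open>k \<ge> 5\<close> not0_implies_Suc by fastforce
    then show ?thesis
      using two_card_tri_vertices[of n] by (simp add: card_tri_edges algebra_simps)
  qed
  moreover have "2 * card (tri_vertices k) = k * k + k"
    using two_card_tri_vertices[of k] by simp
  moreover have "5 * k \<le> k * k"
    using \<open>k \<ge> 5\<close> by simp
  ultimately show False
    by linarith
qed

definition tri_vertex_list :: "nat \<Rightarrow> (nat \<times> nat) list" where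
  "tri_vertex_list k = [(i, j). i \<leftarrow> [0..<k], j \<leftarrow> [0..<Suc i]]"

lemma set_tri_vertex_list: "set (tri_vertex_list k) = tri_vertices k"
  by (force simp: tri_vertex_list_def tri_vertices_def simp del: upt_Suc)

lemma tri_cyclically_orderable_if_explore:
  fixes es :: "(nat \<times> nat) set list"
  assumes "distinct es"
    and es: "set es = (\<Union>p\<in>set (tri_vertex_list (k - 1)). up_triangle p)"
    and "card (set (tri_vertex_list k)) - 1 \<le> length es"
    and "\<forall>W\<in>set (cyclic_windows (card (set (tri_vertex_list k)) - 1) es).
           set (tri_vertex_list k) \<subseteq> explore (length W) W {(0, 0)}"
  shows "cyclically_orderable (tri_vertices k) (tri_edges k)"
proof (rule cyclically_orderable_if_windows_connected)
  show "distinct es" by fact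
  show "set es = tri_edges k"
    using es by (simp add: tri_edges_eq_UN_up_triangle set_tri_vertex_list)
  show "card (tri_vertices k) - 1 \<le> length es"
    using assms(3) by (simp add: set_tri_vertex_list)
  have doubleton: "\<exists>x y. e = {x, y}" if "e \<in> set es" for e
  proof -
    from that es obtain p where "e \<in> up_triangle p"
      by blast
    then show ?thesis
      by (cases p) auto
  qed
  show "\<forall>W\<in>set (cyclic_windows (card (tri_vertices k) - 1) es).
      connected_on (tri_vertices k) (set W)"
  proof
    fix W assume W: "W \<in> set (cyclic_windows (card (tri_vertices k) - 1) es)"
    then have "set W \<subseteq> set es"
      by (auto simp: cyclic_windows_def dest: in_set_takeD)
    with doubleton have "\<forall>e\<in>set W. \<exists>x y. e = {x, y}"
      by blast
    moreover have "tri_vertices k \<subseteq> explore (length W) W {(0, 0)}"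
      using W assms(4) by (simp add: set_tri_vertex_list)
    ultimately show "connected_on (tri_vertices k) (set W)"
      by (rule connected_on_if_explore)
  qed
qed

lemma tri_cyclically_orderable_1: "cyclically_orderable (tri_vertices 1) (tri_edges 1)"
  by (rule tri_cyclically_orderable_if_explore[where es = "[]"]) code_simp+

lemma tri_cyclically_orderable_2: "cyclically_orderable (tri_vertices 2) (tri_edges 2)"
  by (rule tri_cyclically_orderable_if_explore[where es =
     "[{(1, 0), (1, 1)}, {(0, 0), (1, 1)}, {(0, 0), (1, 0)}]"]) code_simp+

lemma tri_cyclically_orderable_3: "cyclically_orderable (tri_vertices 3) (tri_edges 3)"
  by (rule tri_cyclically_orderable_if_explore[where es =
     "[{(2, 0), (2, 1)}, {(1, 0), (1, 1)}, {(1, 1), (2, 2)}, {(0, 0), (1, 0)},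
      {(1, 0), (2, 0)}, {(1, 0), (2, 1)}, {(2, 1), (2, 2)}, {(0, 0), (1, 1)},
      {(1, 1), (2, 1)}]"]) code_simp+

lemma tri_cyclically_orderable_4: "cyclically_orderable (tri_vertices 4) (tri_edges 4)"
  by (rule tri_cyclically_orderable_if_explore[where es =
     "[{(2, 0), (3, 0)}, {(1, 0), (2, 0)}, {(0, 0), (1, 1)}, {(1, 0), (1, 1)},
      {(2, 0), (3, 1)}, {(3, 1), (3, 2)}, {(3, 2), (3, 3)}, {(1, 1), (2, 1)},
      {(2, 2), (3, 2)}, {(3, 0), (3, 1)}, {(2, 0), (2, 1)}, {(0, 0), (1, 0)},
      {(1, 0), (2, 1)}, {(2, 1), (3, 1)}, {(2, 1), (3, 2)}, {(2, 2), (3, 3)},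
      {(1, 1), (2, 2)}, {(2, 1), (2, 2)}]"]) code_simp+

theorem mainTheorem2:
  fixes k :: nat
  assumes "k \<ge> 1"
  shows "cyclically_orderable (tri_vertices k) (tri_edges k) \<longleftrightarrow> k \<le> 4"
proof
  show "k \<le> 4" if "cyclically_orderable (tri_vertices k) (tri_edges k)"
    using that by (rule tri_cyclically_orderable_imp_le_4)
  show "cyclically_orderable (tri_vertices k) (tri_edges k)" if "k \<le> 4"
  proof -
    from assms that consider "k = 1" | "k = 2" | "k = 3" | "k = 4"
      by linarith
    then show ?thesis
      using tri_cyclically_orderable_1 tri_cyclically_orderable_2 tri_cyclically_orderable_3
        tri_cyclically_orderable_4 by cases simp_all
  qed
qed

end
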